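(* Let $n=2^s$, $q=2^r$ ($s,r$ positive integers), $N=|SL(n,q)|$, and let $\{C_i\}_{i=0}^N$ be the weight distribution of the code $C(SL(n,q))$. Then $C_i=C_{N-i}$ for $0\le i\le N$.
   Context: $Tr$ is the matrix trace; for a fixed ordering $g_1,\dots,g_N$ of $SL(n,q)$ and $v=(Tr(g_1),\dots,Tr(g_N))\in\mathbb{F}_q^N$, $C(SL(n,q))=\{u\in\mathbb{F}_2^N:u\cdot v=0\}$ (dot product in $\mathbb{F}_q$). $C_i$ is the number of codewords of Hamming weight $i$. *)

theory Defs
  imports "HOL-Analysis.Analysis"
begin

text \<open>The special linear group SL(n,q) as a set of n x n matrices over the
finite field 'a (n = CARD('n), q = CARD('a)).\<close>
definition SL_set :: "('a::field ^ 'n ^ 'n) set" where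
  "SL_set = {A. det A = 1}"

text \<open>A binary word u in F_2^N (indexed by the elements of SL(n,q)) is identified
with its support S, a subset of SL(n,q); its Hamming weight is card S and the
dot product u . v with v = (Tr g)_g computed in F_q is the sum of Tr g over g in S.
So C_i is the number of such supports of size i whose trace sum vanishes.\<close>
definition SL_code_weight :: "('a::field ^ 'n ^ 'n) itself \<Rightarrow> nat \<Rightarrow> nat" where
  "SL_code_weight _ i =
     card {S. S \<subseteq> (SL_set :: ('a ^ 'n ^ 'n) set) \<and> card S = i \<and> (\<Sum>g\<in>S. trace g) = 0}"

end

theory Submission
  imports Defs
begin

text \<open>Complementation S \<mapsto> SL(n,q) - S turns a support of size i into one of size N - i,
and it preserves the vanishing of the trace sum because the traces of all elements of
SL(n,q) already sum to zero. The latter holds for every n \<ge> 2: adding row j to row i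
permutes SL(n,q), so the diagonal entries g$j$j of all g \<in> SL(n,q) sum to zero.
Neither the characteristic nor the order of the field plays a role.\<close>

lemma card_zero_sum_subsets_complement:
  fixes f :: "'b \<Rightarrow> 'c::ab_group_add"
  assumes "finite A" and "sum f A = 0" and "i \<le> card A"
  shows "card {S. S \<subseteq> A \<and> card S = i \<and> sum f S = 0}
       = card {S. S \<subseteq> A \<and> card S = card A - i \<and> sum f S = 0}"
proof -
  let ?Z = "\<lambda>m. {S. S \<subseteq> A \<and> card S = m \<and> sum f S = 0}"
  have maps_to: "(\<lambda>S. A - S) ` ?Z m \<subseteq> ?Z (card A - m)" if "m \<le> card A" for m
  proof
    fix T assume "T \<in> (\<lambda>S. A - S) ` ?Z m"
    then obtain S where S: "S \<subseteq> A" "card S = m" "sum f S = 0" and T: "T = A - S"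
      by auto
    have "card T = card A - m"
      using S T assms(1) by (simp add: card_Diff_subset finite_subset)
    moreover have "sum f T = 0"
      using S T assms(1,2) sum_diff[OF assms(1) S(1), of f] by simp
    ultimately show "T \<in> ?Z (card A - m)" using T by auto
  qed
  have "bij_betw (\<lambda>S. A - S) (?Z i) (?Z (card A - i))"
    by (rule bij_betw_byWitness[where f' = "\<lambda>S. A - S"])
       (use maps_to[of i] maps_to[of "card A - i"] assms(3) in auto)
  then show ?thesis by (rule bij_betw_same_card)
qed

definition row_add :: "'n \<Rightarrow> 'n \<Rightarrow> 'a::field \<Rightarrow> 'a^'n^'n \<Rightarrow> 'a^'n^'n" where
  "row_add i j c g = (\<chi> k. if k = i then g$i + c *s g$j else g$k)"

lemma det_row_add:
  assumes "i \<noteq> j"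
  shows "det (row_add i j c g) = det g"
proof -
  have "\<And>k. row k g = g$k" by (simp add: row_def vec_eq_iff)
  then show ?thesis
    using det_row_operation[OF assms, where c = c and A = g] by (simp only: row_add_def)
qed

lemma row_add_inverse:
  assumes "i \<noteq> j"
  shows "row_add i j (-c) (row_add i j c g) = g"
  using assms by (simp add: row_add_def vec_eq_iff)

lemma sum_SL_row_eq_0:
  fixes i j :: "'n::finite"
  assumes "i \<noteq> j"
  shows "(\<Sum>g\<in>(SL_set :: ('a::{field,finite}^'n^'n) set). g$j) = 0"
proof -
  have "bij_betw (row_add i j 1) SL_set SL_set"
    by (rule bij_betw_byWitness[where f' = "row_add i j (-1)"])
       (auto simp: SL_set_def det_row_add[OF assms] row_add_inverse[OF assms]
             row_add_inverse[OF assms, of "-1", simplified])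
  then have "(\<Sum>g\<in>SL_set. row_add i j 1 g) = (\<Sum>g\<in>(SL_set :: ('a^'n^'n) set). g)"
    using sum.reindex_bij_betw[of _ _ _ "\<lambda>g. g"] by blast
  then have "(\<Sum>g\<in>SL_set. row_add i j 1 g)$i = (\<Sum>g\<in>(SL_set :: ('a^'n^'n) set). g)$i"
    by simp
  then have "(\<Sum>g\<in>SL_set. g$i + g$j) = (\<Sum>g\<in>(SL_set :: ('a^'n^'n) set). g$i)"
    by (simp add: row_add_def)
  then show ?thesis by (simp add: sum.distrib)
qed

lemma sum_SL_trace_eq_0:
  assumes "CARD('n::finite) \<ge> 2"
  shows "(\<Sum>g\<in>(SL_set :: ('a::{field,finite}^'n^'n) set). trace g) = 0"
proof -
  have "(\<Sum>g\<in>(SL_set :: ('a^'n^'n) set). g$k$k) = 0" for k :: 'n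
  proof -
    have "\<not> UNIV \<subseteq> {k}"
      using card_mono[of "{k}" "UNIV :: 'n set"] assms by auto
    then obtain i where "i \<noteq> k" by blast
    then have "(\<Sum>g\<in>(SL_set :: ('a^'n^'n) set). g$k)$k = 0"
      by (simp add: sum_SL_row_eq_0)
    then show ?thesis by simp
  qed
  then show ?thesis unfolding trace_def by (subst sum.swap) simp
qed

theorem corollary17:
  fixes s r :: nat
  assumes "s > 0" and "r > 0"
    and "CARD('n::finite) = 2 ^ s"
    and "CARD('a::{field,finite}) = 2 ^ r"
  defines "N \<equiv> card (SL_set :: ('a ^ 'n ^ 'n) set)"
  shows "\<forall>i\<le>N. SL_code_weight TYPE('a ^ 'n ^ 'n) i
                = SL_code_weight TYPE('a ^ 'n ^ 'n) (N - i)"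
proof (intro allI impI)
  fix i assume "i \<le> N"
  have "CARD('n) \<ge> 2"
    using assms(1,3) power_increasing[of 1 s "2::nat"] by simp
  then have "(\<Sum>g\<in>(SL_set :: ('a^'n^'n) set). trace g) = 0"
    by (rule sum_SL_trace_eq_0)
  from card_zero_sum_subsets_complement[OF _ this \<open>i \<le> N\<close>[unfolded N_def]]
  show "SL_code_weight TYPE('a ^ 'n ^ 'n) i = SL_code_weight TYPE('a ^ 'n ^ 'n) (N - i)"
    by (simp add: SL_code_weight_def N_def)
qed

end
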